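(* Let $\rho:\mathfrak k\to\operatorname{End}(L^s)$ be a generalized spin representation of the maximal compact subalgebra $\mathfrak k$ of a simply laced Kac--Moody algebra over a field $F$ of characteristic $0$ with diagram $D=(V,E)$, and put $A_i:=2I\cdot\rho(X_i)$. Let $W=\langle s_1,\dots,s_n\mid (s_is_j)^{m_{ij}}=1\rangle$ with $m_{ii}=1$, $m_{ij}=2$ if $i\ne j$ and $\{v_i,v_j\}\notin E$, and $m_{ij}=4$ if $\{v_i,v_j\}\in E$. Then $s_i\mapsto A_i$ extends to a group homomorphism $W\to\mathrm{GL}_s(L)$.
   Context: $L=F(I)$ with $I^2=-1$. $X_1,\dots,X_n$ are the Berman generators of $\mathfrak k$: $\mathfrak k$ is the Lie algebra generated by $X_i=e_i-f_i$ with defining relations $[X_i,[X_i,X_j]]=-X_j$ for adjacent $v_i,v_j$ and $[X_i,X_j]=0$ for non-adjacent $i\neq j$. A generalized spin representation is a Lie algebra homomorphism $\rho:\mathfrak k\to\operatorname{End}(L^s)$ with $\rho(X_i)^2=-\tfrac14\mathrm{id}_s$ for all $i$. *)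

theory Defs
  imports "Jordan_Normal_Form.Matrix"
begin

text \<open>Diagram D = (V,E) with V = {0..<n} (vertex v_i is the index i) and E a set of
  unordered pairs {i,j} of distinct vertices (simple graph; simply laced diagram).\<close>
definition simple_diagram :: "nat \<Rightarrow> nat set set \<Rightarrow> bool" where
  "simple_diagram n E \<longleftrightarrow> (\<forall>e\<in>E. \<exists>i j. i < n \<and> j < n \<and> i \<noteq> j \<and> e = {i, j})"

definition lie_br :: "'a::comm_ring_1 mat \<Rightarrow> 'a mat \<Rightarrow> 'a mat" where
  "lie_br A B = A * B - B * A"

text \<open>Since the maximal compact subalgebra k is presented by the Berman generators X_i and
  relations, a Lie algebra homomorphism rho : k \<rightarrow> End(L^s) is the same as a choice of the
  images R i = rho(X_i) satisfying the defining relations.\<close>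
definition gen_spin_rep :: "nat \<Rightarrow> nat set set \<Rightarrow> nat \<Rightarrow> (nat \<Rightarrow> 'a::field mat) \<Rightarrow> bool" where
  "gen_spin_rep n E s R \<longleftrightarrow>
     (\<forall>i<n. R i \<in> carrier_mat s s) \<and>
     (\<forall>i<n. \<forall>j<n. {i, j} \<in> E \<longrightarrow> lie_br (R i) (lie_br (R i) (R j)) = - R j) \<and>
     (\<forall>i<n. \<forall>j<n. i \<noteq> j \<and> {i, j} \<notin> E \<longrightarrow> lie_br (R i) (R j) = 0\<^sub>m s s) \<and>
     (\<forall>i<n. R i * R i = (- (1 / 4)) \<cdot>\<^sub>m 1\<^sub>m s)"

definition cox_m :: "nat set set \<Rightarrow> nat \<Rightarrow> nat \<Rightarrow> nat" where
  "cox_m E i j = (if i = j then 1 else if {i, j} \<in> E then 4 else 2)"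

text \<open>s_i \<mapsto> A i extends to a group homomorphism W \<rightarrow> GL_s(L), where
  W = < s_1..s_n | (s_i s_j)^(m_ij) = 1 >: by the universal property of the presentation,
  this holds iff every A i is an invertible s x s matrix and the A i satisfy the relations.\<close>
definition extends_to_W_hom :: "nat \<Rightarrow> nat set set \<Rightarrow> nat \<Rightarrow> (nat \<Rightarrow> 'a::field mat) \<Rightarrow> bool" where
  "extends_to_W_hom n E s A \<longleftrightarrow>
     (\<forall>i<n. A i \<in> carrier_mat s s \<and> invertible_mat (A i)) \<and>
     (\<forall>i<n. \<forall>j<n. (A i * A j) ^\<^sub>m (cox_m E i j) = 1\<^sub>m s)"

end

theory Submission
  imports Defs
begin

text \<open>Since \<open>X\<^sub>i\<^sup>2 = -1/4\<close> and \<open>(2I)\<^sup>2 = -4\<close>, every \<open>A\<^sub>i\<close> is an involution.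
  For non-adjacent \<open>i \<noteq> j\<close> the generators commute, hence \<open>(A\<^sub>iA\<^sub>j)\<^sup>2 = 1\<close>. For adjacent ones the
  relation \<open>[X\<^sub>i,[X\<^sub>i,X\<^sub>j]] = -X\<^sub>j\<close> rescales to \<open>[A\<^sub>i,[A\<^sub>i,A\<^sub>j]] = 4A\<^sub>j\<close>; for an involution the left side
  is \<open>2A\<^sub>j - 2A\<^sub>iA\<^sub>jA\<^sub>i\<close>, so \<open>A\<^sub>iA\<^sub>jA\<^sub>i = -A\<^sub>j\<close>, whence \<open>(A\<^sub>iA\<^sub>j)\<^sup>2 = -1\<close> and \<open>(A\<^sub>iA\<^sub>j)\<^sup>4 = 1\<close>.\<close>

lemma smult_smult_mat: "a \<cdot>\<^sub>m (b \<cdot>\<^sub>m A) = (a * b :: 'a::semigroup_mult) \<cdot>\<^sub>m A"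
  by (rule eq_matI) (auto simp: mult.assoc)

lemma one_smult_mat [simp]: "(1 :: 'a::monoid_mult) \<cdot>\<^sub>m A = A"
  by (rule eq_matI) auto

lemma smult_mult_smult_mat:
  assumes "A \<in> carrier_mat nr n" "B \<in> carrier_mat n nc"
  shows "(a \<cdot>\<^sub>m A) * (b \<cdot>\<^sub>m B) = (a * b :: 'a::comm_semiring_0) \<cdot>\<^sub>m (A * B)"
  using mult_smult_assoc_mat[of A nr n "b \<cdot>\<^sub>m B" nc a] mult_smult_distrib[OF assms, of b] assms
  by (simp add: smult_smult_mat)

lemma smult_minus_distrib_mat:
  assumes "A \<in> carrier_mat nr nc" "B \<in> carrier_mat nr nc"
  shows "a \<cdot>\<^sub>m (A - B) = (a :: 'a::comm_ring) \<cdot>\<^sub>m A - a \<cdot>\<^sub>m B"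
  using assms by (intro eq_matI) (auto simp: right_diff_distrib)

lemma smult_square_eq_one:
  assumes "X \<in> carrier_mat n n" "X * X = c \<cdot>\<^sub>m 1\<^sub>m n" "a * a * c = (1 :: 'a::comm_ring_1)"
  shows "(a \<cdot>\<^sub>m X) * (a \<cdot>\<^sub>m X) = 1\<^sub>m n"
  using assms by (simp add: smult_mult_smult_mat smult_smult_mat)

lemma lie_br_carrier_mat [simp]:
  "A \<in> carrier_mat n n \<Longrightarrow> B \<in> carrier_mat n n \<Longrightarrow> lie_br A B \<in> carrier_mat n n"
  by (simp add: lie_br_def minus_carrier_mat)

lemma lie_br_smult:
  assumes "A \<in> carrier_mat n n" "B \<in> carrier_mat n n"
  shows "lie_br (a \<cdot>\<^sub>m A) (b \<cdot>\<^sub>m B) = (a * b :: 'a::comm_ring_1) \<cdot>\<^sub>m lie_br A B"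
  using assms smult_minus_distrib_mat[of "A * B" n n "B * A" "a * b"]
  by (simp add: lie_br_def smult_mult_smult_mat mult.commute)

lemma double_lie_br_smult:
  assumes "X \<in> carrier_mat n n" "Y \<in> carrier_mat n n" "lie_br X (lie_br X Y) = - Y"
  shows "lie_br (a \<cdot>\<^sub>m X) (lie_br (a \<cdot>\<^sub>m X) (a \<cdot>\<^sub>m Y)) = (- (a * a) :: 'a::comm_ring_1) \<cdot>\<^sub>m (a \<cdot>\<^sub>m Y)"
proof -
  have "lie_br (a \<cdot>\<^sub>m X) (lie_br (a \<cdot>\<^sub>m X) (a \<cdot>\<^sub>m Y)) = (a * (a * a)) \<cdot>\<^sub>m (- Y)"
    using assms by (simp add: lie_br_smult)
  then show ?thesis
    using assms(2) by (auto intro!: eq_matI simp: algebra_simps)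
qed

lemma commute_if_lie_br_zero:
  assumes "A \<in> carrier_mat n n" "B \<in> carrier_mat n n" "lie_br A B = 0\<^sub>m n n"
  shows "A * B = B * A"
proof (rule eq_matI)
  fix i j assume "i < dim_row (B * A)" "j < dim_col (B * A)"
  with assms have "i < n" "j < n" by auto
  moreover have "(A * B - B * A) $$ (i, j) = 0"
    using assms(3) \<open>i < n\<close> \<open>j < n\<close> by (simp add: lie_br_def)
  ultimately show "(A * B) $$ (i, j) = (B * A) $$ (i, j)"
    using assms by simp
qed (use assms in auto)

lemma double_lie_br_involution:
  fixes A B :: "'a::comm_ring_1 mat"
  assumes A: "A \<in> carrier_mat n n" and B: "B \<in> carrier_mat n n" and AA: "A * A = 1\<^sub>m n"
  shows "lie_br A (lie_br A B) = 2 \<cdot>\<^sub>m B - 2 \<cdot>\<^sub>m (A * B * A)"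
proof -
  have "A * (A * B) = B" and "B * A * A = B"
    using A B AA by (simp_all add: assoc_mult_mat[symmetric, of A n n A n B n] assoc_mult_mat[of B n n A n A n])
  moreover have "A * (B * A) = A * B * A"
    using A B by (simp add: assoc_mult_mat)
  ultimately have "lie_br A (lie_br A B) = (B - A * B * A) - (A * B * A - B)"
    using A B by (simp add: lie_br_def mult_minus_distrib_mat[of A n n "A * B" n "B * A"]
        minus_mult_distrib_mat[of "A * B" n n "B * A" A n])
  then show ?thesis
    using A B by (intro eq_matI) (auto simp: algebra_simps)
qed

lemma conj_eq_uminus_if_double_lie_br:
  fixes A B :: "'a::idom mat"
  assumes "(2::'a) \<noteq> 0"
    and A: "A \<in> carrier_mat n n" and B: "B \<in> carrier_mat n n" and AA: "A * A = 1\<^sub>m n"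
    and AAB: "lie_br A (lie_br A B) = 4 \<cdot>\<^sub>m B"
  shows "A * B * A = - B"
proof (rule eq_matI)
  fix i j assume "i < dim_row (- B)" "j < dim_col (- B)"
  with B have ij: "i < n" "j < n" by auto
  have "2 * B $$ (i, j) - 2 * (A * B * A) $$ (i, j) = 4 * B $$ (i, j)"
    using arg_cong[OF AAB[unfolded double_lie_br_involution[OF A B AA]], of "\<lambda>M. M $$ (i, j)"]
      A B ij by simp
  then have "2 * ((A * B * A) $$ (i, j) + B $$ (i, j)) = 0"
    by (simp add: algebra_simps)
  with assms(1) have "(A * B * A) $$ (i, j) + B $$ (i, j) = 0"
    using mult_eq_0_iff by blast
  then show "(A * B * A) $$ (i, j) = (- B) $$ (i, j)"
    using B ij by (simp add: eq_neg_iff_add_eq_0)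
qed (use A B in auto)

lemma pow_mat_two: "M \<in> carrier_mat n n \<Longrightarrow> M ^\<^sub>m 2 = M * M"
  by (simp add: numeral_2_eq_2)

lemma pow_mat_four: "M \<in> carrier_mat n n \<Longrightarrow> M ^\<^sub>m 4 = (M * M) * (M * M)"
  by (simp add: numeral_Bit0 numeral_2_eq_2 assoc_mult_mat[of _ n n _ n _ n])

lemma mult_pow_mat_two_if_commute:
  assumes "A \<in> carrier_mat n n" "B \<in> carrier_mat n n"
    and "A * A = 1\<^sub>m n" "B * B = 1\<^sub>m n" "A * B = B * A"
  shows "(A * B) ^\<^sub>m 2 = 1\<^sub>m n"
proof -
  have "(A * B) * (A * B) = A * (B * A) * B"
    using assms(1,2) by (simp add: assoc_mult_mat[of _ n n _ n _ n])
  also have "\<dots> = A * (A * B) * B"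
    using assms(5) by simp
  also have "\<dots> = (A * A) * (B * B)"
    using assms(1,2) by (simp add: assoc_mult_mat[of _ n n _ n _ n])
  finally have "(A * B) * (A * B) = 1\<^sub>m n"
    using assms(2-4) by simp
  then show ?thesis
    using pow_mat_two[of "A * B" n] assms(1,2) by simp
qed

lemma mult_pow_mat_four_if_anticommute:
  fixes A B :: "'a::comm_ring_1 mat"
  assumes "A \<in> carrier_mat n n" "B \<in> carrier_mat n n"
    and "B * B = 1\<^sub>m n" "A * B * A = - B"
  shows "(A * B) ^\<^sub>m 4 = 1\<^sub>m n"
proof -
  have "(A * B) * (A * B) = (A * B * A) * B"
    using assms(1,2) by (simp add: assoc_mult_mat[of _ n n _ n _ n])
  also have "\<dots> = - 1\<^sub>m n"
    using assms by simp
  finally have "(A * B) * (A * B) = - 1\<^sub>m n" .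
  then show ?thesis
    using pow_mat_four[of "A * B" n] assms(1,2) by simp
qed

lemma invertible_mat_if_square_eq_one:
  assumes "A \<in> carrier_mat n n" "A * A = 1\<^sub>m n"
  shows "invertible_mat A"
  using assms unfolding invertible_mat_def inverts_mat_def by (auto simp: square_mat.simps)

lemma extends_to_W_hom_if_involutions:
  assumes carrier: "\<And>i. i < n \<Longrightarrow> A i \<in> carrier_mat s s"
    and square: "\<And>i. i < n \<Longrightarrow> A i * A i = 1\<^sub>m s"
    and anticommute: "\<And>i j. i < n \<Longrightarrow> j < n \<Longrightarrow> {i, j} \<in> E \<Longrightarrow> A i * A j * A i = - A j"
    and commute: "\<And>i j. i < n \<Longrightarrow> j < n \<Longrightarrow> i \<noteq> j \<Longrightarrow> {i, j} \<notin> E \<Longrightarrow> A i * A j = A j * A i"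
  shows "extends_to_W_hom n E s A"
  unfolding extends_to_W_hom_def cox_m_def
proof (intro conjI allI impI)
  fix i j assume i: "i < n" and j: "j < n"
  consider "i = j" | "i \<noteq> j" "{i, j} \<in> E" | "i \<noteq> j" "{i, j} \<notin> E"
    by blast
  then show "(A i * A j) ^\<^sub>m (if i = j then 1 else if {i, j} \<in> E then 4 else 2) = 1\<^sub>m s"
  proof cases
    case 1
    then show ?thesis using carrier[OF i] square[OF i] by simp
  next
    case 2
    then show ?thesis
      using mult_pow_mat_four_if_anticommute[OF carrier[OF i] carrier[OF j] square[OF j]]
        anticommute[OF i j] by simp
  next
    case 3
    then show ?thesis
      using mult_pow_mat_two_if_commute[OF carrier[OF i] carrier[OF j] square[OF i] square[OF j]]
        commute[OF i j] by simp
  qed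
qed (use carrier square invertible_mat_if_square_eq_one in auto)

theorem mainTheorem6:
  fixes n s :: nat and E :: "nat set set"
    and I :: "'a::field_char_0" and R :: "nat \<Rightarrow> 'a mat"
  assumes "simple_diagram n E"
    and "I * I = -1"
    and "gen_spin_rep n E s R"
  shows "extends_to_W_hom n E s (\<lambda>i. (2 * I) \<cdot>\<^sub>m R i)"
proof -
  \<comment> \<open>The diagram need not be simple: \<open>cox_m\<close> tests \<open>i = j\<close> before looking at \<open>E\<close>.\<close>
  define a where "a = 2 * I"
  have aa: "a * a = -4"
    using assms(2) by (simp add: a_def algebra_simps)
  note R = assms(3)[unfolded gen_spin_rep_def]
  show ?thesis
    unfolding a_def[symmetric]
  proof (rule extends_to_W_hom_if_involutions)
    fix i j assume i: "i < n" and j: "j < n"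
    show "a \<cdot>\<^sub>m R i \<in> carrier_mat s s"
      using R i by simp
    show square: "(a \<cdot>\<^sub>m R i) * (a \<cdot>\<^sub>m R i) = 1\<^sub>m s"
      using R i aa by (auto intro: smult_square_eq_one)
    show "(a \<cdot>\<^sub>m R i) * (a \<cdot>\<^sub>m R j) * (a \<cdot>\<^sub>m R i) = - (a \<cdot>\<^sub>m R j)" if "{i, j} \<in> E"
      using R i j that square aa double_lie_br_smult[of "R i" s "R j" a]
      by (intro conj_eq_uminus_if_double_lie_br) auto
    show "(a \<cdot>\<^sub>m R i) * (a \<cdot>\<^sub>m R j) = (a \<cdot>\<^sub>m R j) * (a \<cdot>\<^sub>m R i)" if "i \<noteq> j" "{i, j} \<notin> E"
      using R i j that lie_br_smult[of "R i" s "R j" a a]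
      by (intro commute_if_lie_br_zero) auto
  qed
qed

end
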